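(* Let $f=f(x_1,\ldots,x_n)$ be a positive non-canalyzing Boolean function such that for every $j\in[n]$ both restrictions $f_{|x_j=0}$ and $f_{|x_j=1}$ are canalyzing. Let $\mathbf{y}$ be a minimal one of $f$ of Hamming weight $2$ such that $\overline{\mathbf{y}}$ is a maximal zero of $f$, let $i,s$ be the two coordinates where $\mathbf{y}$ equals $1$, and let $f_0=f_{|x_i=0}$, $f_1=f_{|x_i=1}$. Then: (a) $x_s$ is relevant for both $f_0$ and $f_1$; (b) for $\alpha_i\in\{0,1\}$, if $(\alpha_1,\ldots,\alpha_{i-1},\alpha_{i+1},\ldots,\alpha_n)\in B^{n-1}$ is an extremal point of $f_{\alpha_i}$, then $(\alpha_1,\ldots,\alpha_{i-1},\alpha_i,\alpha_{i+1},\ldots,\alpha_n)\in B^n$ is an extremal point of $f$.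
   Context: $B=\{0,1\}$, $\preceq$ coordinatewise order; $\overline{\mathbf{y}}$ is the complement of $\mathbf{y}$. $f$ is positive if $f(\mathbf{x})=1$ and $\mathbf{x}\preceq\mathbf{y}$ imply $f(\mathbf{y})=1$. Maximal zeros / minimal ones are $\preceq$-maximal false / $\preceq$-minimal true points; extremal points are both. $f_{|x_i=\alpha}$ is the function of the other $n-1$ variables obtained by fixing $x_i=\alpha$. A variable $x_k$ is relevant for $g$ if $g_{|x_k=0}\not\equiv g_{|x_k=1}$. $f$ is canalyzing if for some $i$, $f_{|x_i=0}$ or $f_{|x_i=1}$ is constant. *)

theory Defs
  imports Main
begin

text \<open>Boolean functions of arity n are modelled as predicates on bool lists;
  only arguments of length n matter. Coordinates are 0-based: x_1..x_n
  correspond to list positions 0..n-1. False < True is the order on B.\<close>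

definition pts :: "nat \<Rightarrow> bool list set" where
  "pts n = {x. length x = n}"

definition leqv :: "bool list \<Rightarrow> bool list \<Rightarrow> bool" where
  "leqv x y \<longleftrightarrow> list_all2 (\<le>) x y"

definition compl :: "bool list \<Rightarrow> bool list" where
  "compl y = map Not y"

definition hweight :: "bool list \<Rightarrow> nat" where
  "hweight x = count_list x True"

definition positive_fun :: "nat \<Rightarrow> (bool list \<Rightarrow> bool) \<Rightarrow> bool" where
  "positive_fun n f \<longleftrightarrow>
     (\<forall>x\<in>pts n. \<forall>y\<in>pts n. f x \<and> leqv x y \<longrightarrow> f y)"

definition max_zero :: "nat \<Rightarrow> (bool list \<Rightarrow> bool) \<Rightarrow> bool list \<Rightarrow> bool" where
  "max_zero n f x \<longleftrightarrow> x \<in> pts n \<and> \<not> f x \<and>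
     (\<forall>y\<in>pts n. leqv x y \<and> y \<noteq> x \<longrightarrow> f y)"

definition min_one :: "nat \<Rightarrow> (bool list \<Rightarrow> bool) \<Rightarrow> bool list \<Rightarrow> bool" where
  "min_one n f x \<longleftrightarrow> x \<in> pts n \<and> f x \<and>
     (\<forall>y\<in>pts n. leqv y x \<and> y \<noteq> x \<longrightarrow> \<not> f y)"

definition extremal :: "nat \<Rightarrow> (bool list \<Rightarrow> bool) \<Rightarrow> bool list \<Rightarrow> bool" where
  "extremal n f x \<longleftrightarrow> max_zero n f x \<or> min_one n f x"

definition restr :: "(bool list \<Rightarrow> bool) \<Rightarrow> nat \<Rightarrow> bool \<Rightarrow> (bool list \<Rightarrow> bool)" where
  "restr f i a = (\<lambda>xs. f (take i xs @ a # drop i xs))"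

definition const_fun :: "nat \<Rightarrow> (bool list \<Rightarrow> bool) \<Rightarrow> bool" where
  "const_fun n g \<longleftrightarrow> (\<forall>x\<in>pts n. \<forall>y\<in>pts n. g x = g y)"

definition canalyzing :: "nat \<Rightarrow> (bool list \<Rightarrow> bool) \<Rightarrow> bool" where
  "canalyzing n f \<longleftrightarrow>
     (\<exists>i<n. const_fun (n - 1) (restr f i False) \<or> const_fun (n - 1) (restr f i True))"

definition relevant :: "nat \<Rightarrow> (bool list \<Rightarrow> bool) \<Rightarrow> nat \<Rightarrow> bool" where
  "relevant n g k \<longleftrightarrow> k < n \<and>
     (\<exists>x\<in>pts (n - 1). restr g k False x \<noteq> restr g k True x)"

end

theory Submission
  imports Defs
begin

text \<open>A maximal zero of f_{|x_i=c}, lifted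
  to f, has this property for all coordinates other than i, and then also for i: if the point
  has x_s = 1, after flipping x_i it lies above y; otherwise it lies below \<not>y and must equal \<not>y,
  since a strict inequality would push one of its flips, a one, up to \<not>y. Minimal ones are
  handled by the same argument for the dual function x \<mapsto> \<not> f (\<not>x), for which y and \<not>y swap roles.\<close>

definition insert_at :: "nat \<Rightarrow> bool list \<Rightarrow> bool \<Rightarrow> bool list" where
  "insert_at i a c = take i a @ c # drop i a"

lemma restr_eq_insert_at: "restr f i c a = f (insert_at i a c)"
  by (simp add: restr_def insert_at_def)

lemma length_insert_at [simp]: "i \<le> length a \<Longrightarrow> length (insert_at i a c) = Suc (length a)"
  by (simp add: insert_at_def)

lemma nth_insert_at:
  "i \<le> length a \<Longrightarrow> insert_at i a c ! k = (if k < i then a ! k else if k = i then c else a ! (k - 1))"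
  by (auto simp: insert_at_def nth_append min_def nth_Cons' not_less)

lemma insert_at_remove_nth: "i < length z \<Longrightarrow> insert_at i (take i z @ drop (Suc i) z) c = z[i := c]"
  by (simp add: insert_at_def min_def upd_conv_take_nth_drop)

lemma insert_at_update:
  assumes "i \<le> length a" "k \<le> length a" "k \<noteq> i"
  shows "(insert_at i a c)[k := d] = insert_at i (a[if k < i then k else k - 1 := d]) c"
  by (rule nth_equalityI) (use assms in \<open>auto simp: nth_insert_at nth_list_update\<close>)

lemma leqv_iff_nth: "leqv x z \<longleftrightarrow> length x = length z \<and> (\<forall>k<length x. x ! k \<longrightarrow> z ! k)"
  by (auto simp: leqv_def list_all2_conv_all_nth le_bool_def)

lemma leqv_update_True: "leqv x (x[q := True])"
  unfolding leqv_iff_nth by (metis length_list_update nth_list_update_eq nth_list_update_neq)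

lemma leqv_update_False: "leqv (x[q := False]) x"
  unfolding leqv_iff_nth by (metis length_list_update nth_list_update_eq nth_list_update_neq)

lemma update_neq: "q < length x \<Longrightarrow> x ! q \<noteq> b \<Longrightarrow> x[q := b] \<noteq> x"
  by (metis nth_list_update_eq)

lemma update_in_pts [simp]: "x[q := b] \<in> pts n \<longleftrightarrow> x \<in> pts n"
  by (simp add: pts_def)

lemma positive_funD: "positive_fun n f \<Longrightarrow> f x \<Longrightarrow> leqv x z \<Longrightarrow> x \<in> pts n \<Longrightarrow> z \<in> pts n \<Longrightarrow> f z"
  unfolding positive_fun_def by blast

lemma strict_leqv_flip:
  assumes "leqv x z" "x \<noteq> z"
  obtains q where "q < length x" "\<not> x ! q" "z ! q" "leqv (x[q := True]) z"
proof -
  have len: "length x = length z" using assms(1) by (simp add: leqv_iff_nth)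
  then obtain q where q: "q < length x" "x ! q \<noteq> z ! q"
    using assms(2) nth_equalityI[of x z] by auto
  with assms(1) have "\<not> x ! q" "z ! q" by (auto simp: leqv_iff_nth)
  moreover have "leqv (x[q := True]) z"
    using assms(1) q(1) \<open>z ! q\<close> len by (auto simp: leqv_iff_nth nth_list_update)
  ultimately show thesis using q(1) that by blast
qed

lemma max_zero_if_flips:
  assumes pos: "positive_fun n f" and x: "x \<in> pts n" "\<not> f x"
    and flips: "\<And>q. q < n \<Longrightarrow> \<not> x ! q \<Longrightarrow> f (x[q := True])"
  shows "max_zero n f x"
  unfolding max_zero_def
proof (intro conjI ballI impI)
  fix z assume z: "z \<in> pts n" "leqv x z \<and> z \<noteq> x"
  then obtain q where "q < length x" "\<not> x ! q" "leqv (x[q := True]) z"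
    by (metis strict_leqv_flip)
  with flips[of q] show "f z"
    using pos x z by (auto simp: pts_def intro: positive_funD)
qed (use x in auto)

lemma above_max_zero: "max_zero n f x \<Longrightarrow> z \<in> pts n \<Longrightarrow> leqv x z \<Longrightarrow> z \<noteq> x \<Longrightarrow> f z"
  unfolding max_zero_def by blast

lemma below_min_one: "min_one n f y \<Longrightarrow> z \<in> pts n \<Longrightarrow> leqv z y \<Longrightarrow> z \<noteq> y \<Longrightarrow> \<not> f z"
  unfolding min_one_def by blast

lemma pivot_flip_one:
  assumes pos: "positive_fun n f" and ymin: "min_one n f y" and ycmax: "max_zero n f (compl y)"
    and supp: "\<And>k. k < n \<Longrightarrow> y ! k \<longleftrightarrow> k = i \<or> k = s" and "i < n"
    and x: "x \<in> pts n" "\<not> x ! i"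
    and flips: "\<And>q. q < n \<Longrightarrow> q \<noteq> i \<Longrightarrow> \<not> x ! q \<Longrightarrow> f (x[q := True])"
  shows "f (x[i := True])"
proof (cases "x ! s")
  case True
  have len: "length y = n" "length x = n" using ymin x by (simp_all add: min_one_def pts_def)
  have "leqv y (x[i := True])"
    unfolding leqv_iff_nth
  proof (intro conjI allI impI)
    fix k assume "k < length y" "y ! k"
    with supp len have "k = i \<or> k = s" by simp
    with True x(2) \<open>i < n\<close> len show "x[i := True] ! k" by (auto simp: nth_list_update)
  qed (use len in simp)
  then show ?thesis
    using pos ymin x by (auto simp: min_one_def intro: positive_funD)
next
  case False
  have cy: "compl y \<in> pts n" using ycmax by (simp add: max_zero_def)
  have "leqv x (compl y)"
    using x cy False supp by (auto simp: leqv_iff_nth compl_def pts_def)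
  have "x = compl y"
  proof (rule ccontr)
    assume "x \<noteq> compl y"
    with \<open>leqv x (compl y)\<close> obtain q
      where q: "q < length x" "\<not> x ! q" "compl y ! q" "leqv (x[q := True]) (compl y)"
      by (rule strict_leqv_flip)
    with x cy supp have "q < n" "q \<noteq> i" by (auto simp: compl_def pts_def)
    with q flips have "f (x[q := True])" by blast
    with q(4) have "f (compl y)"
      using pos x cy by (auto intro: positive_funD)
    with ycmax show False by (simp add: max_zero_def)
  qed
  show ?thesis
    by (rule above_max_zero[OF ycmax])
      (use x \<open>x = compl y\<close> \<open>i < n\<close> in \<open>simp_all add: pts_def leqv_update_True update_neq\<close>)
qed

lemma max_zero_insert_at:
  assumes pos: "positive_fun n f" and ymin: "min_one n f y" and ycmax: "max_zero n f (compl y)"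
    and supp: "\<And>k. k < n \<Longrightarrow> y ! k \<longleftrightarrow> k = i \<or> k = s" and "i < n"
    and a: "max_zero (n - 1) (restr f i c) a"
  shows "max_zero n f (insert_at i a c)"
proof -
  let ?x = "insert_at i a c"
  have la: "length a = n - 1" using a by (simp add: max_zero_def pts_def)
  with \<open>i < n\<close> have x: "?x \<in> pts n" by (simp add: pts_def)
  have other_flips: "f (?x[q := True])" if q: "q < n" "q \<noteq> i" "\<not> ?x ! q" for q
  proof -
    let ?q' = "if q < i then q else q - 1"
    have "?x[q := True] = insert_at i (a[?q' := True]) c"
      using q la \<open>i < n\<close> by (intro insert_at_update) auto
    moreover have "restr f i c (a[?q' := True])"
    proof (rule above_max_zero[OF a])
      have "\<not> a ! ?q'" "?q' < length a"
        using q la \<open>i < n\<close> by (auto simp: nth_insert_at)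
      then show "a[?q' := True] \<noteq> a" by (simp add: update_neq)
    qed (use a in \<open>simp_all add: max_zero_def leqv_update_True\<close>)
    ultimately show ?thesis by (simp add: restr_eq_insert_at)
  qed
  show ?thesis
  proof (rule max_zero_if_flips[OF pos x])
    show "\<not> f ?x" using a by (simp add: max_zero_def restr_eq_insert_at)
    fix q assume "q < n" "\<not> ?x ! q"
    show "f (?x[q := True])"
    proof (cases "q = i")
      case True
      then show ?thesis
        using pivot_flip_one[OF pos ymin ycmax supp \<open>i < n\<close> x] other_flips \<open>\<not> ?x ! q\<close>
        by blast
    qed (use other_flips \<open>q < n\<close> \<open>\<not> ?x ! q\<close> in blast)
  qed
qed

lemma relevantI:
  assumes "k < m" "a \<in> pts m" "g (a[k := False]) \<noteq> g (a[k := True])"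
  shows "relevant m g k"
proof -
  let ?b = "take k a @ drop (Suc k) a"
  have "length a = m" using assms(2) by (simp add: pts_def)
  with assms show ?thesis
    unfolding relevant_def restr_eq_insert_at
    by (intro conjI bexI[of _ ?b]) (auto simp: insert_at_remove_nth pts_def)
qed

lemma relevant_restr:
  assumes "i < n" "s < n" "i \<noteq> s" and z: "z \<in> pts n" and flip: "f (z[s := False]) \<noteq> f (z[s := True])"
  shows "relevant (n - 1) (restr f i (z ! i)) (if s < i then s else s - 1)"
proof (rule relevantI)
  let ?s' = "if s < i then s else s - 1" and ?a = "take i z @ drop (Suc i) z"
  have lz: "length z = n" using z by (simp add: pts_def)
  with \<open>i < n\<close> show a: "?a \<in> pts (n - 1)" by (simp add: pts_def)
  have "restr f i (z ! i) (?a[?s' := d]) = f (z[s := d])" for d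
  proof -
    have "insert_at i (?a[?s' := d]) (z ! i) = (insert_at i ?a (z ! i))[s := d]"
      using assms a by (subst insert_at_update) (auto simp: pts_def)
    also have "\<dots> = z[s := d]"
      using insert_at_remove_nth[of i z "z ! i"] lz \<open>i < n\<close> by simp
    finally show ?thesis by (simp add: restr_eq_insert_at)
  qed
  with flip show "restr f i (z ! i) (?a[?s' := False]) \<noteq> restr f i (z ! i) (?a[?s' := True])"
    by simp
qed (use assms in auto)

definition dual_fun :: "(bool list \<Rightarrow> bool) \<Rightarrow> bool list \<Rightarrow> bool" where
  "dual_fun f x \<longleftrightarrow> \<not> f (compl x)"

lemma compl_compl [simp]: "compl (compl x) = x"
  by (simp add: compl_def comp_def)

lemma compl_in_pts_iff [simp]: "compl x \<in> pts n \<longleftrightarrow> x \<in> pts n"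
  by (simp add: compl_def pts_def)

lemma compl_eq_compl_iff [simp]: "compl x = compl z \<longleftrightarrow> x = z"
  by (metis compl_compl)

lemma leqv_compl_iff [simp]: "leqv (compl x) (compl z) \<longleftrightarrow> leqv z x"
  by (auto simp: leqv_iff_nth compl_def)

lemma compl_insert_at: "compl (insert_at i a c) = insert_at i (compl a) (\<not> c)"
  by (simp add: compl_def insert_at_def take_map drop_map)

lemma ball_pts_compl: "(\<forall>z\<in>pts n. P (compl z)) \<longleftrightarrow> (\<forall>z\<in>pts n. P z)"
  by (metis compl_compl compl_in_pts_iff)

lemma positive_fun_dual_fun: "positive_fun n f \<Longrightarrow> positive_fun n (dual_fun f)"
  unfolding positive_fun_def dual_fun_def
  by (metis compl_in_pts_iff leqv_compl_iff)

lemma max_zero_dual_fun_iff: "max_zero n (dual_fun f) x \<longleftrightarrow> min_one n f (compl x)"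
proof -
  have "(\<forall>w\<in>pts n. leqv w (compl x) \<and> w \<noteq> compl x \<longrightarrow> \<not> f w) \<longleftrightarrow>
        (\<forall>z\<in>pts n. leqv x z \<and> z \<noteq> x \<longrightarrow> \<not> f (compl z))"
    using ball_pts_compl[of n "\<lambda>w. leqv w (compl x) \<and> w \<noteq> compl x \<longrightarrow> \<not> f w"] by simp
  then show ?thesis by (auto simp: max_zero_def min_one_def dual_fun_def)
qed

lemma min_one_dual_fun_iff: "min_one n (dual_fun f) x \<longleftrightarrow> max_zero n f (compl x)"
proof -
  have "(\<forall>w\<in>pts n. leqv (compl x) w \<and> w \<noteq> compl x \<longrightarrow> f w) \<longleftrightarrow>
        (\<forall>z\<in>pts n. leqv z x \<and> z \<noteq> x \<longrightarrow> f (compl z))"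
    using ball_pts_compl[of n "\<lambda>w. leqv (compl x) w \<and> w \<noteq> compl x \<longrightarrow> f w"] by simp
  then show ?thesis by (auto simp: max_zero_def min_one_def dual_fun_def)
qed

lemma restr_dual_fun: "restr (dual_fun f) i c = dual_fun (restr f i (\<not> c))"
  by (simp add: fun_eq_iff restr_eq_insert_at dual_fun_def compl_insert_at)

lemma min_one_insert_at:
  assumes pos: "positive_fun n f" and ymin: "min_one n f y" and ycmax: "max_zero n f (compl y)"
    and supp: "\<And>k. k < n \<Longrightarrow> y ! k \<longleftrightarrow> k = i \<or> k = s" and "i < n"
    and a: "min_one (n - 1) (restr f i c) a"
  shows "min_one n f (insert_at i a c)"
proof -
  have "max_zero n (dual_fun f) (insert_at i (compl a) (\<not> c))"
  proof (rule max_zero_insert_at[OF positive_fun_dual_fun[OF pos] _ _ supp \<open>i < n\<close>])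
    show "min_one n (dual_fun f) y" using ycmax by (simp add: min_one_dual_fun_iff)
    show "max_zero n (dual_fun f) (compl y)" using ymin by (simp add: max_zero_dual_fun_iff)
    show "max_zero (n - 1) (restr (dual_fun f) i (\<not> c)) (compl a)"
      using a by (simp add: restr_dual_fun max_zero_dual_fun_iff)
  qed
  then show ?thesis by (simp add: max_zero_dual_fun_iff compl_insert_at)
qed

lemma relevant_restr_max_zero:
  assumes "max_zero n f z" "i < n" "s < n" "i \<noteq> s" "\<not> z ! s"
  shows "relevant (n - 1) (restr f i (z ! i)) (if s < i then s else s - 1)"
proof -
  have z: "z \<in> pts n" and lz: "length z = n" using assms(1) by (simp_all add: max_zero_def pts_def)
  have "f (z[s := True])"
    by (rule above_max_zero[OF assms(1)]) (use z lz assms(3,5) in \<open>simp_all add: leqv_update_True update_neq\<close>)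
  moreover have "\<not> f (z[s := False])"
    using assms(1,5) list_update_id[of z s] by (simp add: max_zero_def)
  ultimately show ?thesis using relevant_restr[OF assms(2-4) z] by auto
qed

lemma relevant_restr_min_one:
  assumes "min_one n f z" "i < n" "s < n" "i \<noteq> s" "z ! s"
  shows "relevant (n - 1) (restr f i (z ! i)) (if s < i then s else s - 1)"
proof -
  have z: "z \<in> pts n" and lz: "length z = n" using assms(1) by (simp_all add: min_one_def pts_def)
  have "\<not> f (z[s := False])"
    by (rule below_min_one[OF assms(1)]) (use z lz assms(3,5) in \<open>simp_all add: leqv_update_False update_neq\<close>)
  moreover have "f (z[s := True])"
    using assms(1,5) list_update_id[of z s] by (simp add: min_one_def)
  ultimately show ?thesis using relevant_restr[OF assms(2-4) z] by auto
qed

lemma hweight_two_nth_iff: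
  assumes "hweight y = 2" "i < length y" "s < length y" "i \<noteq> s" "y ! i" "y ! s" "k < length y"
  shows "y ! k \<longleftrightarrow> k = i \<or> k = s"
proof -
  have "card {k. k < length y \<and> y ! k} = 2"
    using assms(1) by (simp add: hweight_def count_list_eq_length_filter length_filter_conv_card)
  then have "{i, s} = {k. k < length y \<and> y ! k}"
    by (intro card_subset_eq) (use assms in auto)
  with assms(7) show ?thesis by blast
qed

theorem mainTheorem7:
  fixes n :: nat and f :: "bool list \<Rightarrow> bool" and y :: "bool list" and i s :: nat
  assumes pos: "positive_fun n f"
    and noncan: "\<not> canalyzing n f"
    and rcan: "\<forall>j<n. canalyzing (n - 1) (restr f j False) \<and> canalyzing (n - 1) (restr f j True)"
    and ymin: "min_one n f y"
    and yw: "hweight y = 2"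
    and ycmax: "max_zero n f (compl y)"
    and "i < n" and "s < n" and "i \<noteq> s" and "y ! i" and "y ! s"
  shows "relevant (n - 1) (restr f i False) (if s < i then s else s - 1)
       \<and> relevant (n - 1) (restr f i True) (if s < i then s else s - 1)
       \<and> (\<forall>ai a. a \<in> pts (n - 1) \<and> extremal (n - 1) (restr f i ai) a
                 \<longrightarrow> extremal n f (take i a @ ai # drop i a))"
proof -
  have ly: "length y = n" using ymin by (simp add: min_one_def pts_def)
  have supp: "y ! k \<longleftrightarrow> k = i \<or> k = s" if "k < n" for k
    by (rule hweight_two_nth_iff[OF yw]) (use ly that assms(7-11) in simp_all)
  have "compl y ! i = False" "\<not> compl y ! s"
    using assms(7,8,10,11) ly by (simp_all add: compl_def)
  with relevant_restr_max_zero[OF ycmax assms(7-9)] relevant_restr_min_one[OF ymin assms(7-9)] assms(10,11)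
  have "relevant (n - 1) (restr f i False) (if s < i then s else s - 1)"
    "relevant (n - 1) (restr f i True) (if s < i then s else s - 1)"
    by simp_all
  moreover have "extremal n f (insert_at i a c)" if "extremal (n - 1) (restr f i c) a" for c a
    using that max_zero_insert_at[OF pos ymin ycmax supp \<open>i < n\<close>]
      min_one_insert_at[OF pos ymin ycmax supp \<open>i < n\<close>]
    by (auto simp: extremal_def)
  ultimately show ?thesis by (simp add: insert_at_def)
qed

end
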